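(* Let $Y$ be a random variable whose moment generating function $E[e^{tY}]$ exists for $|t|<r_0$ for some $r_0>0$. Let $(Y_j)_{j\ge1}$ be mutually independent copies of $Y$, $S_0=0$, $S_k=Y_1+\cdots+Y_k$ for $k\ge1$. Let $r$ be a positive integer and define the probabilistic bivariate $r$-Bell polynomials $\phi_{n,r}^Y(x,y)$ by $$\Big(1+y\big(E[e^{Yt}]-1\big)\Big)^{x}e^{rt}=\sum_{n=0}^{\infty}\phi_{n,r}^Y(x,y)\frac{t^n}{n!}.$$ Then for every $n\ge0$, $$\phi_{n,r}^Y(x,y)=\sum_{k=0}^{n}{n+r\brace k+r}_{r,Y}(x)_k\,y^k,$$ where ${n+r\brace k+r}_{r,Y}=\frac{1}{k!}\sum_{j=0}^{k}\binom{k}{j}(-1)^{k-j}E\big[(S_j+r)^n\big]$ for $n\ge k\ge0$.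
   Context: $(x)_0=1$, $(x)_k=x(x-1)\cdots(x-k+1)$ for $k\ge1$. The power $(1+u)^x$ is understood via the binomial series $\sum_{k\ge0}\binom{x}{k}u^k$ and the identity is one of power series in $t$; $x,y$ are variables. The numbers ${n+r\brace k+r}_{r,Y}$ are the probabilistic $r$-Stirling numbers of the second kind associated with $Y$. *)

theory Defs
  imports "HOL-Probability.Probability" "HOL-Computational_Algebra.Formal_Power_Series"
begin

definition falling_fact :: "real \<Rightarrow> nat \<Rightarrow> real" where
  "falling_fact x k = (\<Prod>i<k. x - real i)"

text \<open>Moment generating function E[e^{tY}] as a formal power series in t:
  sum over n of E[Y^n] t^n / n!.\<close>
definition mgf_fps :: "'a measure \<Rightarrow> ('a \<Rightarrow> real) \<Rightarrow> real fps" where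
  "mgf_fps M Y = Abs_fps (\<lambda>n. (\<integral>\<omega>. (Y \<omega>) ^ n \<partial>M) / fact n)"

text \<open>Probabilistic bivariate r-Bell polynomials: n! times the t^n coefficient of
  (1 + y (E[e^{Yt}] - 1))^x e^{rt}, where (1+u)^x is the binomial series
  sum_k (x choose k) u^k, i.e. fps_binomial x composed with u.\<close>
definition prob_r_bell :: "'a measure \<Rightarrow> ('a \<Rightarrow> real) \<Rightarrow> nat \<Rightarrow> nat \<Rightarrow> real \<Rightarrow> real \<Rightarrow> real" where
  "prob_r_bell M Y r n x y =
     fact n * fps_nth ((fps_binomial x oo (fps_const y * (mgf_fps M Y - 1))) * fps_exp (real r)) n"

definition partial_sum :: "(nat \<Rightarrow> 'a \<Rightarrow> real) \<Rightarrow> nat \<Rightarrow> 'a \<Rightarrow> real" where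
  "partial_sum Ys j \<omega> = (\<Sum>i\<in>{1..j}. Ys i \<omega>)"

definition prob_r_stirling2 :: "'a measure \<Rightarrow> (nat \<Rightarrow> 'a \<Rightarrow> real) \<Rightarrow> nat \<Rightarrow> nat \<Rightarrow> nat \<Rightarrow> real" where
  "prob_r_stirling2 M Ys r n k =
     (1 / fact k) * (\<Sum>j\<le>k. real (k choose j) * (-1) ^ (k - j) *
        (\<integral>\<omega>. (partial_sum Ys j \<omega> + real r) ^ n \<partial>M))"

end

theory Submission
  imports Defs
begin

text \<open>The moment generating function enters only as the formal series of moments, so no
  analytic convergence is needed; the exponential moment hypothesis only serves to make all moments of \<open>Y\<close> finite.
  By independence the moment series of \<open>S\<^sub>j + r\<close> is \<open>G\<^sup>j e\<^sup>r\<^sup>t\<close>, where \<open>G\<close> is the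
  moment series of \<open>Y\<close>, so by the binomial theorem the alternating sum defining the
  probabilistic \<open>r\<close>-Stirling number is \<open>n!/k!\<close> times the \<open>t\<^sup>n\<close>-coefficient of
  \<open>(G - 1)\<^sup>k e\<^sup>r\<^sup>t\<close>. Expanding \<open>(1 + y(G - 1))\<^sup>x\<close> as \<open>\<Sum>\<^sub>k (x choose k) y\<^sup>k (G - 1)\<^sup>k\<close> and
  using \<open>(x choose k) k! = (x)\<^sub>k\<close> gives the identity. The argument works for every natural
  \<open>r\<close>.\<close>

lemma power_divide_fact_le_exp:
  fixes x :: real
  assumes "x \<ge> 0"
  shows "x ^ n / fact n \<le> exp x"
proof -
  have exp_sums: "(\<lambda>k. x ^ k / fact k) sums exp x"
    using exp_converges[of x] by (simp add: divide_inverse mult.commute)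
  have "x ^ n / fact n \<le> (\<Sum>k<Suc n. x ^ k / fact k)"
    by (rule member_le_sum) (use assms in auto)
  also have "\<dots> \<le> exp x"
    using sum_le_suminf[OF sums_summable[OF exp_sums], of "{..<Suc n}"] exp_sums assms
    by (auto simp: sums_iff)
  finally show ?thesis .
qed

lemma abs_power_le_exp_sum:
  fixes t u :: real
  assumes "t > 0"
  shows "\<bar>u\<bar> ^ n \<le> fact n / t ^ n * (exp (t * u) + exp (- t * u))"
proof -
  have "(t * \<bar>u\<bar>) ^ n / fact n \<le> exp (t * \<bar>u\<bar>)"
    using power_divide_fact_le_exp[of "t * \<bar>u\<bar>" n] assms by simp
  also have "\<dots> \<le> exp (t * u) + exp (- t * u)"
    by (cases "u \<ge> 0") auto
  finally show ?thesis
    using assms by (simp add: power_mult_distrib field_simps)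
qed

lemma integrable_power_if_exp_integrable:
  fixes Y :: "'a \<Rightarrow> real"
  assumes "Y \<in> borel_measurable M"
    and "\<exists>r0>0. \<forall>t. \<bar>t\<bar> < r0 \<longrightarrow> integrable M (\<lambda>\<omega>. exp (t * Y \<omega>))"
  shows "integrable M (\<lambda>\<omega>. Y \<omega> ^ n)"
proof -
  obtain r0 where "r0 > 0" and exp_int: "\<And>t. \<bar>t\<bar> < r0 \<Longrightarrow> integrable M (\<lambda>\<omega>. exp (t * Y \<omega>))"
    using assms(2) by blast
  define t where "t = r0 / 2"
  have "t > 0" "\<bar>t\<bar> < r0" "\<bar>- t\<bar> < r0"
    using \<open>r0 > 0\<close> by (auto simp: t_def)
  have "integrable M (\<lambda>\<omega>. fact n / t ^ n * (exp (t * Y \<omega>) + exp (- t * Y \<omega>)))"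
    using exp_int[OF \<open>\<bar>t\<bar> < r0\<close>] exp_int[OF \<open>\<bar>- t\<bar> < r0\<close>] by auto
  then show ?thesis
  proof (rule Bochner_Integration.integrable_bound)
    show "(\<lambda>\<omega>. Y \<omega> ^ n) \<in> borel_measurable M"
      using assms(1) by measurable
    show "AE \<omega> in M. norm (Y \<omega> ^ n) \<le> norm (fact n / t ^ n * (exp (t * Y \<omega>) + exp (- t * Y \<omega>)))"
      using abs_power_le_exp_sum[OF \<open>t > 0\<close>] \<open>t > 0\<close> by (intro AE_I2) (simp add: power_abs)
  qed
qed

lemma mgf_fps_nth: "fps_nth (mgf_fps M Z) n = (\<integral>\<omega>. Z \<omega> ^ n \<partial>M) / fact n"
  by (simp add: mgf_fps_def)

lemma (in prob_space) mgf_fps_const: "mgf_fps M (\<lambda>_. c) = fps_exp c"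
  by (rule fps_ext) (simp add: mgf_fps_nth fps_exp_def prob_space)

lemma (in prob_space) mgf_fps_add:
  fixes Z W :: "'a \<Rightarrow> real"
  assumes int_prod: "\<And>a b. integrable M (\<lambda>\<omega>. Z \<omega> ^ a * W \<omega> ^ b)"
    and integral_prod: "\<And>a b. (\<integral>\<omega>. Z \<omega> ^ a * W \<omega> ^ b \<partial>M) =
      (\<integral>\<omega>. Z \<omega> ^ a \<partial>M) * (\<integral>\<omega>. W \<omega> ^ b \<partial>M)"
  shows "integrable M (\<lambda>\<omega>. (Z \<omega> + W \<omega>) ^ n)"
    and "mgf_fps M (\<lambda>\<omega>. Z \<omega> + W \<omega>) = mgf_fps M Z * mgf_fps M W"
proof -
  have binomial: "(\<lambda>\<omega>. (Z \<omega> + W \<omega>) ^ n) =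
      (\<lambda>\<omega>. \<Sum>k\<le>n. real (n choose k) * (Z \<omega> ^ k * W \<omega> ^ (n - k)))" for n
    by (simp add: binomial_ring mult.assoc)
  show "integrable M (\<lambda>\<omega>. (Z \<omega> + W \<omega>) ^ n)"
    unfolding binomial by (intro Bochner_Integration.integrable_sum integrable_mult_right int_prod)
  show "mgf_fps M (\<lambda>\<omega>. Z \<omega> + W \<omega>) = mgf_fps M Z * mgf_fps M W"
  proof (rule fps_ext)
    fix n
    have "fps_nth (mgf_fps M (\<lambda>\<omega>. Z \<omega> + W \<omega>)) n =
        (\<Sum>k\<le>n. real (n choose k) * ((\<integral>\<omega>. Z \<omega> ^ k \<partial>M) * (\<integral>\<omega>. W \<omega> ^ (n - k) \<partial>M))) / fact n"
      unfolding mgf_fps_nth binomial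
      by (subst Bochner_Integration.integral_sum) (auto simp: int_prod integral_prod)
    also have "\<dots> = (\<Sum>k\<le>n. (\<integral>\<omega>. Z \<omega> ^ k \<partial>M) / fact k * ((\<integral>\<omega>. W \<omega> ^ (n - k) \<partial>M) / fact (n - k)))"
      unfolding sum_divide_distrib by (intro sum.cong refl) (simp add: binomial_fact field_simps)
    also have "\<dots> = fps_nth (mgf_fps M Z * mgf_fps M W) n"
      by (simp add: fps_mult_nth mgf_fps_nth atLeast0AtMost)
    finally show "fps_nth (mgf_fps M (\<lambda>\<omega>. Z \<omega> + W \<omega>)) n = fps_nth (mgf_fps M Z * mgf_fps M W) n" .
  qed
qed

lemma (in prob_space) mgf_fps_add_const:
  assumes "\<And>n. integrable M (\<lambda>\<omega>. Z \<omega> ^ n)"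
  shows "mgf_fps M (\<lambda>\<omega>. Z \<omega> + c) = mgf_fps M Z * fps_exp c"
  using mgf_fps_add(2)[of Z "\<lambda>_. c"] assms by (simp add: mgf_fps_const prob_space)

lemma (in prob_space) mgf_fps_add_indep:
  fixes Z W :: "'a \<Rightarrow> real"
  assumes "indep_var borel Z borel W"
    and int_Z: "\<And>n. integrable M (\<lambda>\<omega>. Z \<omega> ^ n)" and int_W: "\<And>n. integrable M (\<lambda>\<omega>. W \<omega> ^ n)"
  shows "integrable M (\<lambda>\<omega>. (Z \<omega> + W \<omega>) ^ n)"
    and "mgf_fps M (\<lambda>\<omega>. Z \<omega> + W \<omega>) = mgf_fps M Z * mgf_fps M W"
proof -
  have indep_powers: "indep_var borel ((\<lambda>z. z ^ a) \<circ> Z) borel ((\<lambda>w. w ^ b) \<circ> W)" for a b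
    by (rule indep_var_compose[OF assms(1)]) auto
  have "integrable M ((\<lambda>z. z ^ a) \<circ> Z)" "integrable M ((\<lambda>w. w ^ b) \<circ> W)" for a b
    using int_Z int_W by (simp_all add: comp_def)
  note moments_prod = indep_var_integrable[OF indep_powers this]
    indep_var_lebesgue_integral[OF indep_powers this]
  show "integrable M (\<lambda>\<omega>. (Z \<omega> + W \<omega>) ^ n)"
    and "mgf_fps M (\<lambda>\<omega>. Z \<omega> + W \<omega>) = mgf_fps M Z * mgf_fps M W"
    by (rule mgf_fps_add; use moments_prod in \<open>simp add: comp_def\<close>)+
qed

lemma identically_distributed_power_moments:
  fixes X Y :: "'a \<Rightarrow> real"
  assumes "X \<in> borel_measurable M" "Y \<in> borel_measurable M"
    and "distr M borel X = distr M borel Y"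
  shows "integrable M (\<lambda>\<omega>. X \<omega> ^ n) \<longleftrightarrow> integrable M (\<lambda>\<omega>. Y \<omega> ^ n)"
    and "(\<integral>\<omega>. X \<omega> ^ n \<partial>M) = (\<integral>\<omega>. Y \<omega> ^ n \<partial>M)"
proof -
  have "integrable M (\<lambda>\<omega>. X \<omega> ^ n) \<longleftrightarrow> integrable (distr M borel X) (\<lambda>z. z ^ n)"
    using assms(1) by (simp add: integrable_distr_eq)
  also have "\<dots> \<longleftrightarrow> integrable M (\<lambda>\<omega>. Y \<omega> ^ n)"
    using assms(2,3) by (simp add: integrable_distr_eq)
  finally show "integrable M (\<lambda>\<omega>. X \<omega> ^ n) \<longleftrightarrow> integrable M (\<lambda>\<omega>. Y \<omega> ^ n)" .
  have "(\<integral>\<omega>. X \<omega> ^ n \<partial>M) = (\<integral>z. z ^ n \<partial>distr M borel X)"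
    using assms(1) by (simp add: integral_distr)
  also have "\<dots> = (\<integral>\<omega>. Y \<omega> ^ n \<partial>M)"
    unfolding assms(3) using assms(2) by (simp add: integral_distr)
  finally show "(\<integral>\<omega>. X \<omega> ^ n \<partial>M) = (\<integral>\<omega>. Y \<omega> ^ n \<partial>M)" .
qed

lemma (in prob_space) mgf_fps_partial_sum:
  fixes Y :: "'a \<Rightarrow> real" and Ys :: "nat \<Rightarrow> 'a \<Rightarrow> real"
  assumes Y: "Y \<in> borel_measurable M" and int_Y: "\<And>n. integrable M (\<lambda>\<omega>. Y \<omega> ^ n)"
    and Ys: "\<And>i. i \<ge> 1 \<Longrightarrow> Ys i \<in> borel_measurable M"
    and distr_Ys: "\<And>i. i \<ge> 1 \<Longrightarrow> distr M borel (Ys i) = distr M borel Y"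
    and indep: "indep_vars (\<lambda>_. borel) Ys {1..}"
  shows "(\<forall>n. integrable M (\<lambda>\<omega>. partial_sum Ys j \<omega> ^ n)) \<and>
    mgf_fps M (partial_sum Ys j) = mgf_fps M Y ^ j"
proof (induction j)
  case 0
  have "partial_sum Ys 0 = (\<lambda>_. 0)"
    by (simp add: partial_sum_def fun_eq_iff)
  then show ?case
    by (simp add: mgf_fps_const)
next
  case (Suc j)
  let ?S = "partial_sum Ys j" and ?X = "Ys (Suc j)"
  note moments_X = identically_distributed_power_moments[OF Ys[of "Suc j"] Y distr_Ys[of "Suc j"]]
  have int_X: "integrable M (\<lambda>\<omega>. ?X \<omega> ^ n)" for n
    using moments_X(1) int_Y by simp
  have "mgf_fps M ?X = mgf_fps M Y"
    by (rule fps_ext) (simp add: mgf_fps_nth moments_X(2))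
  have "indep_var borel ?X borel (\<lambda>\<omega>. \<Sum>i\<in>{1..j}. Ys i \<omega>)"
    by (rule indep_vars_sum) (auto intro: indep_vars_subset[OF indep])
  then have "indep_var borel ?X borel ?S"
    by (simp add: partial_sum_def[abs_def])
  moreover have "partial_sum Ys (Suc j) = (\<lambda>\<omega>. ?X \<omega> + ?S \<omega>)"
    by (simp add: partial_sum_def fun_eq_iff)
  ultimately show ?case
    using mgf_fps_add_indep[of ?X ?S] Suc.IH int_X \<open>mgf_fps M ?X = mgf_fps M Y\<close>
    by (simp add: mult.commute)
qed

lemma fps_compose_times_nth:
  fixes A B E :: "'a::comm_semiring_1 fps"
  assumes "fps_nth B 0 = 0"
  shows "fps_nth ((A oo B) * E) n = (\<Sum>i\<le>n. fps_nth A i * fps_nth (B ^ i * E) n)"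
proof -
  define P where "P = (\<Sum>i\<le>n. fps_const (fps_nth A i) * B ^ i)"
  have "fps_nth (A oo B) m = fps_nth P m" if "m \<le> n" for m
  proof -
    have "fps_nth (A oo B) m = (\<Sum>i\<in>{0..m}. fps_nth A i * fps_nth (B ^ i) m)"
      by (rule fps_compose_nth)
    also have "\<dots> = (\<Sum>i\<le>n. fps_nth A i * fps_nth (B ^ i) m)"
      using that startsby_zero_power_prefix[OF assms] by (intro sum.mono_neutral_left) auto
    finally show ?thesis
      by (simp add: P_def fps_sum_nth)
  qed
  then have "fps_nth ((A oo B) * E) n = fps_nth (P * E) n"
    by (simp add: fps_mult_nth)
  then show ?thesis
    by (simp add: P_def sum_distrib_right fps_sum_nth mult.assoc)
qed

lemma fps_power_minus_one_times_nth:
  fixes G E :: "'a::comm_ring_1 fps"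
  shows "fps_nth ((G - 1) ^ k * E) n =
    (\<Sum>j\<le>k. of_nat (k choose j) * (-1) ^ (k - j) * fps_nth (G ^ j * E) n)"
proof -
  have const: "fps_const (of_nat c * (-1) ^ m) = (of_nat c * (-1) ^ m :: 'a fps)" for c m
    by (simp flip: fps_const_mult fps_const_power fps_const_neg add: fps_of_nat)
  have "(G - 1) ^ k * E = (\<Sum>j\<le>k. fps_const (of_nat (k choose j) * (-1) ^ (k - j)) * (G ^ j * E))"
    unfolding const using binomial_ring[of G "-1" k]
    by (simp add: sum_distrib_left mult_ac)
  then show ?thesis
    by (simp add: fps_sum_nth)
qed

lemma falling_fact_eq_gbinomial: "falling_fact x k = (x gchoose k) * fact k"
  by (simp add: falling_fact_def gbinomial_prod_rev atLeast0LessThan)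

lemma (in prob_space) prob_r_bell_eq_sum:
  "prob_r_bell M Y r n x y =
    fact n * (\<Sum>k\<le>n. (x gchoose k) * y ^ k * fps_nth ((mgf_fps M Y - 1) ^ k * fps_exp (real r)) n)"
proof -
  have "fps_nth (fps_const y * (mgf_fps M Y - 1)) 0 = 0"
    by (simp add: mgf_fps_nth prob_space)
  note compose_nth = fps_compose_times_nth[OF this]
  show ?thesis
    unfolding prob_r_bell_def compose_nth
    by (simp add: power_mult_distrib mult.assoc)
qed

lemma (in prob_space) integral_shifted_partial_sum_power:
  fixes Y :: "'a \<Rightarrow> real" and Ys :: "nat \<Rightarrow> 'a \<Rightarrow> real"
  assumes "Y \<in> borel_measurable M" and "\<And>n. integrable M (\<lambda>\<omega>. Y \<omega> ^ n)"
    and "\<And>i. i \<ge> 1 \<Longrightarrow> Ys i \<in> borel_measurable M"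
    and "\<And>i. i \<ge> 1 \<Longrightarrow> distr M borel (Ys i) = distr M borel Y"
    and "indep_vars (\<lambda>_. borel) Ys {1..}"
  shows "(\<integral>\<omega>. (partial_sum Ys j \<omega> + c) ^ n \<partial>M) = fact n * fps_nth (mgf_fps M Y ^ j * fps_exp c) n"
proof -
  have "mgf_fps M (\<lambda>\<omega>. partial_sum Ys j \<omega> + c) = mgf_fps M Y ^ j * fps_exp c"
    using mgf_fps_partial_sum[OF assms] mgf_fps_add_const by simp
  from arg_cong[where f = "\<lambda>F. fps_nth F n", OF this] show ?thesis
    by (simp add: mgf_fps_nth field_simps)
qed

lemma (in prob_space) prob_r_stirling2_eq_fps_nth:
  fixes Y :: "'a \<Rightarrow> real" and Ys :: "nat \<Rightarrow> 'a \<Rightarrow> real"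
  assumes "Y \<in> borel_measurable M" and "\<And>n. integrable M (\<lambda>\<omega>. Y \<omega> ^ n)"
    and "\<And>i. i \<ge> 1 \<Longrightarrow> Ys i \<in> borel_measurable M"
    and "\<And>i. i \<ge> 1 \<Longrightarrow> distr M borel (Ys i) = distr M borel Y"
    and "indep_vars (\<lambda>_. borel) Ys {1..}"
  shows "prob_r_stirling2 M Ys r n k =
    fact n / fact k * fps_nth ((mgf_fps M Y - 1) ^ k * fps_exp (real r)) n"
  unfolding prob_r_stirling2_def fps_power_minus_one_times_nth
  by (simp add: integral_shifted_partial_sum_power[OF assms] sum_distrib_left sum_divide_distrib mult_ac)

theorem theorem2p3:
  fixes M :: "'a measure" and Y :: "'a \<Rightarrow> real" and Ys :: "nat \<Rightarrow> 'a \<Rightarrow> real"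
    and r n :: nat and x y :: real
  assumes "prob_space M"
    and "Y \<in> borel_measurable M"
    and "\<exists>r0>0. \<forall>t. \<bar>t\<bar> < r0 \<longrightarrow> integrable M (\<lambda>\<omega>. exp (t * Y \<omega>))"
    and "\<And>j. j \<ge> 1 \<Longrightarrow> Ys j \<in> borel_measurable M"
    and "\<And>j. j \<ge> 1 \<Longrightarrow> distr M borel (Ys j) = distr M borel Y"
    and "prob_space.indep_vars M (\<lambda>_. borel) Ys {1..}"
    and "r \<ge> 1"
  shows "prob_r_bell M Y r n x y =
    (\<Sum>k\<le>n. prob_r_stirling2 M Ys r n k * falling_fact x k * y ^ k)"
proof -
  interpret prob_space M by fact
  have "integrable M (\<lambda>\<omega>. Y \<omega> ^ m)" for m
    using integrable_power_if_exp_integrable[OF assms(2,3)] .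
  note stirling = prob_r_stirling2_eq_fps_nth[OF assms(2) this assms(4-6)]
  show ?thesis
    unfolding prob_r_bell_eq_sum sum_distrib_left
    by (intro sum.cong refl) (simp add: stirling falling_fact_eq_gbinomial)
qed

end
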